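(* Let $k$ be a commutative ring and $A$ a commutative $k$-algebra such that $\operatorname{Ider}_k(A)=\operatorname{Der}_k(A)$ and $\operatorname{Der}_k(A)$ is a free $A$-module of finite rank with basis $D^1_1,\dots,D^n_1$, where $D^1,\dots,D^n\in\operatorname{HS}_k(A)$. Then every $k$-linear differential operator $P:A\to A$ of order $\le d$ can be written uniquely as $$P=\sum_{\alpha\in\mathbb N^n,\ |\alpha|\le d}a_\alpha\,\mathbf D_\alpha,\qquad a_\alpha\in A,$$ where $\mathbf D_\alpha=D^1_{\alpha_1}\circ\cdots\circ D^n_{\alpha_n}$.
   Context: $\operatorname{HS}_k(A)$: infinite sequences $D=(D_0,D_1,\dots)$ of $k$-linear maps $A\to A$ with $D_0=\mathrm{Id}$ and $D_i(xy)=\sum_{r+s=i}D_r(x)D_s(y)$. $\operatorname{Ider}_k(A)=\{D_1:D\in\operatorname{HS}_k(A)\}$. $k$-linear differential operators of order $\le d$ are defined inductively: order $0$ = multiplications by elements of $A$; $\varphi\in\operatorname{End}_k(A)$ has order $\le i+1$ iff $\varphi\circ a-a\circ\varphi$ has order $\le i$ for all $a\in A$. *)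

theory Defs
  imports Main
begin

text \<open>A commutative k-algebra A is modelled by a type 'a :: comm_ring_1 together with
 a ring homomorphism phi : 'k \<Rightarrow> 'a (the structure map); the k-module structure on A
 is c \<cdot> x = phi c * x.\<close>

definition ring_hom_fn :: "('k::comm_ring_1 \<Rightarrow> 'a::comm_ring_1) \<Rightarrow> bool" where
  "ring_hom_fn phi \<longleftrightarrow> phi 1 = 1 \<and> (\<forall>a b. phi (a + b) = phi a + phi b)
     \<and> (\<forall>a b. phi (a * b) = phi a * phi b)"

definition klin :: "('k::comm_ring_1 \<Rightarrow> 'a::comm_ring_1) \<Rightarrow> ('a \<Rightarrow> 'a) \<Rightarrow> bool" where
  "klin phi f \<longleftrightarrow> (\<forall>x y. f (x + y) = f x + f y) \<and> (\<forall>c x. f (phi c * x) = phi c * f x)"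

text \<open>Hasse--Schmidt derivations (infinite length).\<close>
definition HS :: "('k::comm_ring_1 \<Rightarrow> 'a::comm_ring_1) \<Rightarrow> (nat \<Rightarrow> 'a \<Rightarrow> 'a) \<Rightarrow> bool" where
  "HS phi D \<longleftrightarrow> D 0 = id \<and> (\<forall>i. klin phi (D i))
     \<and> (\<forall>i x y. D i (x * y) = (\<Sum>r\<le>i. D r x * D (i - r) y))"

definition Ider :: "('k::comm_ring_1 \<Rightarrow> 'a::comm_ring_1) \<Rightarrow> ('a \<Rightarrow> 'a) set" where
  "Ider phi = {D 1 | D. HS phi D}"

definition Der :: "('k::comm_ring_1 \<Rightarrow> 'a::comm_ring_1) \<Rightarrow> ('a \<Rightarrow> 'a) set" where
  "Der phi = {f. klin phi f \<and> (\<forall>x y. f (x * y) = x * f y + f x * y)}"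

fun diffop :: "('k::comm_ring_1 \<Rightarrow> 'a::comm_ring_1) \<Rightarrow> nat \<Rightarrow> ('a \<Rightarrow> 'a) \<Rightarrow> bool" where
  "diffop phi 0 P \<longleftrightarrow> (\<exists>a. P = (\<lambda>x. a * x))"
| "diffop phi (Suc i) P \<longleftrightarrow> klin phi P \<and> (\<forall>a. diffop phi i (\<lambda>x. P (a * x) - a * P x))"

definition multi_idx :: "nat \<Rightarrow> nat \<Rightarrow> (nat \<Rightarrow> nat) set" where
  "multi_idx n d = {\<alpha>. (\<forall>j\<ge>n. \<alpha> j = 0) \<and> (\<Sum>j<n. \<alpha> j) \<le> d}"

fun Dcomp :: "(nat \<Rightarrow> nat \<Rightarrow> 'a \<Rightarrow> 'a) \<Rightarrow> nat \<Rightarrow> (nat \<Rightarrow> nat) \<Rightarrow> 'a \<Rightarrow> 'a" where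
  "Dcomp Dd 0 \<alpha> = id"
| "Dcomp Dd (Suc m) \<alpha> = Dcomp Dd m \<alpha> \<circ> Dd m (\<alpha> m)"

end

theory Submission
  imports Defs
begin

(* Write [P,a] = P \<circ> a - a \<circ> P for the commutator of an operator P with the
   multiplication by a.  An operator has order < k iff all k-fold iterated commutators vanish,
   and for an operator of order \<le> N its N-fold commutators are multiplications; evaluating
   them at 1 gives the "symbol" sy P [a1,...,aN], a symmetric function of the a_i.

   (1) Commutator calculus: Grothendieck's order is the bracket order; orders add under
       composition.
   (2) For a Hasse-Schmidt derivation D, [D_m, a] = D_1(a) D_(m-1) + (order \<le> m-2), hence for
       the monomial operator D_\<alpha> (|\<alpha>| = N+1) the symbol satisfies the recursion
       sy D_\<alpha> (a # as) = \<Sum>_j D^j_1(a) sy D_(\<alpha>-e_j) as.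
   (3) Uniqueness: by this recursion and the independence of the D^j_1, a vanishing
       combination of top-degree symbols has vanishing coefficients.
   (4) Existence: for P of order \<le> N+1 the coefficients of a \<mapsto> sy P (a # as) (inductively
       a combination of D_\<beta>-symbols, |\<beta>| = N) are derivations in a, hence combinations of
       the D^j_1; symmetry of the symbol makes these coefficients integrate to coefficients
       of the D_\<alpha>, |\<alpha>| = N+1.  Subtracting \<Sum> e_\<alpha> D_\<alpha> lowers the order. *)

section \<open>Commutators with multiplications\<close>

definition bracket :: "('a::comm_ring_1 \<Rightarrow> 'a) \<Rightarrow> 'a \<Rightarrow> 'a \<Rightarrow> 'a" where
  "bracket P a = (\<lambda>x. P (a * x) - a * P x)"

fun brackets :: "('a::comm_ring_1 \<Rightarrow> 'a) \<Rightarrow> 'a list \<Rightarrow> 'a \<Rightarrow> 'a" where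
  "brackets P [] = P"
| "brackets P (a # as) = brackets (bracket P a) as"

definition symbol :: "('a::comm_ring_1 \<Rightarrow> 'a) \<Rightarrow> 'a list \<Rightarrow> 'a" where
  "symbol P as = brackets P as 1"

text \<open>R has order < k: all iterated commutators of length at least k vanish.\<close>
definition ord_below :: "nat \<Rightarrow> ('a::comm_ring_1 \<Rightarrow> 'a) \<Rightarrow> bool" where
  "ord_below k R \<longleftrightarrow> (\<forall>as. k \<le> length as \<longrightarrow> brackets R as = (\<lambda>x. 0))"

lemma brackets_append: "brackets P (as @ bs) = brackets (brackets P as) bs"
  by (induction as arbitrary: P) auto

lemma brackets_zero [simp]: "brackets (\<lambda>x. 0) as = (\<lambda>x. 0)"
  by (induction as) (auto simp: bracket_def)

lemma bracket_add: "bracket (\<lambda>x. F x + G x) a = (\<lambda>x. bracket F a x + bracket G a x)"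
  by (simp add: bracket_def fun_eq_iff algebra_simps)

lemma bracket_diff: "bracket (\<lambda>x. F x - G x) a = (\<lambda>x. bracket F a x - bracket G a x)"
  by (simp add: bracket_def fun_eq_iff algebra_simps)

lemma bracket_scal: "bracket (\<lambda>x. c * F x) a = (\<lambda>x. c * bracket F a x)"
  by (simp add: bracket_def fun_eq_iff algebra_simps)

lemma brackets_add: "brackets (\<lambda>x. F x + G x) as = (\<lambda>x. brackets F as x + brackets G as x)"
  by (induction as arbitrary: F G) (auto simp: bracket_add)

lemma brackets_diff: "brackets (\<lambda>x. F x - G x) as = (\<lambda>x. brackets F as x - brackets G as x)"
  by (induction as arbitrary: F G) (auto simp: bracket_diff)

lemma brackets_scal: "brackets (\<lambda>x. c * F x) as = (\<lambda>x. c * brackets F as x)"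
  by (induction as arbitrary: F) (auto simp: bracket_scal)

lemma brackets_sum:
  "finite S \<Longrightarrow> brackets (\<lambda>x. \<Sum>i\<in>S. F i x) as = (\<lambda>x. \<Sum>i\<in>S. brackets (F i) as x)"
  by (induction S rule: finite_induct) (auto simp: brackets_add)

lemma symbol_zero [simp]: "symbol (\<lambda>x. 0) as = 0"
  by (simp add: symbol_def)

lemma symbol_add: "symbol (\<lambda>x. F x + G x) as = symbol F as + symbol G as"
  by (simp add: symbol_def brackets_add)

lemma symbol_diff: "symbol (\<lambda>x. F x - G x) as = symbol F as - symbol G as"
  by (simp add: symbol_def brackets_diff)

lemma symbol_scal: "symbol (\<lambda>x. c * F x) as = c * symbol F as"
  by (simp add: symbol_def brackets_scal)

lemma symbol_sum: "finite S \<Longrightarrow> symbol (\<lambda>x. \<Sum>i\<in>S. F i x) as = (\<Sum>i\<in>S. symbol (F i) as)"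
  by (simp add: symbol_def brackets_sum)

lemma symbol_Cons: "symbol P (a # as) = symbol (bracket P a) as"
  by (simp add: symbol_def)

lemma bracket_add_arg: "klin phi P \<Longrightarrow> bracket P (x + y) = (\<lambda>z. bracket P x z + bracket P y z)"
  by (simp add: bracket_def klin_def fun_eq_iff algebra_simps)

lemma bracket_scalar_arg:
  assumes "klin phi P" shows "bracket P (phi k * x) = (\<lambda>z. phi k * bracket P x z)"
proof
  fix z
  have "P (phi k * (x * z)) = phi k * P (x * z)" using assms unfolding klin_def by blast
  then show "bracket P (phi k * x) z = phi k * bracket P x z"
    by (simp add: bracket_def algebra_simps mult.assoc)
qed

lemma bracket_mult_arg:
  "bracket P (x * y) = (\<lambda>z. y * bracket P x z + x * bracket P y z + bracket (bracket P x) y z)"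
  by (simp add: bracket_def fun_eq_iff algebra_simps)

lemma symbol_swap: "symbol P (x # y # as) = symbol P (y # x # as)"
proof -
  have "bracket (bracket P x) y = bracket (bracket P y) x"
    by (simp add: bracket_def fun_eq_iff algebra_simps)
  then show ?thesis by (simp add: symbol_def)
qed

lemma klin_mult: "klin phi (\<lambda>x. c * x)"
  by (simp add: klin_def algebra_simps)

lemma klin_zero: "klin phi (\<lambda>x. 0)"
  by (simp add: klin_def)

lemma klin_add: "klin phi F \<Longrightarrow> klin phi G \<Longrightarrow> klin phi (\<lambda>x. F x + G x)"
  by (simp add: klin_def algebra_simps)

lemma klin_diff: "klin phi F \<Longrightarrow> klin phi G \<Longrightarrow> klin phi (\<lambda>x. F x - G x)"
  by (simp add: klin_def algebra_simps)

lemma klin_scal: "klin phi F \<Longrightarrow> klin phi (\<lambda>x. c * F x)"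
  by (simp add: klin_def algebra_simps)

lemma klin_sum:
  "finite S \<Longrightarrow> (\<And>i. i \<in> S \<Longrightarrow> klin phi (F i)) \<Longrightarrow> klin phi (\<lambda>x. \<Sum>i\<in>S. F i x)"
  by (induction S rule: finite_induct) (auto intro: klin_add klin_zero)

lemma klin_comp: "klin phi F \<Longrightarrow> klin phi G \<Longrightarrow> klin phi (\<lambda>x. F (G x))"
  by (simp add: klin_def)

lemma klin_bracket: assumes "klin phi F" shows "klin phi (bracket F a)"
proof -
  have "F (a * (phi c * x)) = phi c * F (a * x)" for c x
    using assms unfolding klin_def by (metis mult.left_commute)
  then show ?thesis using assms by (simp add: klin_def bracket_def algebra_simps)
qed

lemma klin_at_0: assumes "klin phi F" shows "F 0 = 0"
proof -
  have "F (0 + 0) = F 0 + F 0" using assms by (simp only: klin_def)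
  then show ?thesis by simp
qed

lemma klin_minus: assumes "klin phi F" shows "F (x - y) = F x - F y"
proof -
  have "F (x - y + y) = F (x - y) + F y" using assms by (simp only: klin_def)
  then show ?thesis by (simp add: algebra_simps)
qed

section \<open>The bracket order\<close>

lemma ord_below_mono: "ord_below p R \<Longrightarrow> p \<le> q \<Longrightarrow> ord_below q R"
  by (simp add: ord_below_def)

lemma ord_below_0: "ord_below 0 R \<longleftrightarrow> R = (\<lambda>x. 0)"
  by (metis brackets.simps(1) brackets_zero le0 ord_below_def)

lemma ord_below_Suc: "ord_below (Suc k) R \<longleftrightarrow> (\<forall>a. ord_below k (bracket R a))"
proof
  assume h: "ord_below (Suc k) R"
  show "\<forall>a. ord_below k (bracket R a)" unfolding ord_below_def
  proof (intro allI impI)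
    fix a and as :: "'a list" assume "k \<le> length as"
    then show "brackets (bracket R a) as = (\<lambda>x. 0)"
      using h unfolding ord_below_def by (metis brackets.simps(2) Suc_le_mono length_Cons)
  qed
next
  assume h: "\<forall>a. ord_below k (bracket R a)"
  show "ord_below (Suc k) R" unfolding ord_below_def
  proof (intro allI impI)
    fix as :: "'a list" assume "Suc k \<le> length as"
    then obtain a bs where "as = a # bs" "k \<le> length bs" by (cases as) auto
    then show "brackets R as = (\<lambda>x. 0)" using h by (simp add: ord_below_def)
  qed
qed

lemma ord_below_bracket: "ord_below k R \<Longrightarrow> ord_below (k - 1) (bracket R a)"
  by (cases k) (auto simp: ord_below_0 ord_below_Suc bracket_def)

lemma ord_below_zero: "ord_below k (\<lambda>x. 0)"
  by (simp add: ord_below_def)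

lemma ord_below_add: "ord_below k F \<Longrightarrow> ord_below k G \<Longrightarrow> ord_below k (\<lambda>x. F x + G x)"
  by (simp add: ord_below_def brackets_add)

lemma ord_below_diff: "ord_below k F \<Longrightarrow> ord_below k G \<Longrightarrow> ord_below k (\<lambda>x. F x - G x)"
  by (simp add: ord_below_def brackets_diff)

lemma ord_below_scal: "ord_below k F \<Longrightarrow> ord_below k (\<lambda>x. c * F x)"
  by (simp add: ord_below_def brackets_scal)

lemma ord_below_sum:
  "finite S \<Longrightarrow> (\<And>i. i \<in> S \<Longrightarrow> ord_below k (F i)) \<Longrightarrow> ord_below k (\<lambda>x. \<Sum>i\<in>S. F i x)"
  by (simp add: ord_below_def brackets_sum)

lemma ord_below_symbol: "ord_below k R \<Longrightarrow> k \<le> length as \<Longrightarrow> symbol R as = 0"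
  by (simp add: ord_below_def symbol_def)

lemma bracket_free_is_mult: "(\<And>b. bracket F b = (\<lambda>x. 0)) \<Longrightarrow> F = (\<lambda>x. x * F 1)"
  by (metis (no_types) bracket_def eq_iff_diff_eq_0 mult.right_neutral)

text \<open>If P has order \<le> N+1 and all its (N+1)-symbols vanish, then P has order \<le> N: the
  (N+1)-fold commutators are multiplications by their symbols.\<close>
lemma ord_below_lower:
  assumes ord: "ord_below (Suc (Suc N)) P" and sym: "\<And>as. length as = Suc N \<Longrightarrow> symbol P as = 0"
  shows "ord_below (Suc N) P"
  unfolding ord_below_def
proof (intro allI impI)
  fix as :: "'a list" assume len: "Suc N \<le> length as"
  show "brackets P as = (\<lambda>x. 0)"
  proof (cases "length as = Suc N")
    case True
    have "bracket (brackets P as) b = (\<lambda>x. 0)" for b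
      using ord True brackets_append[of P as "[b]"] by (simp add: ord_below_def)
    then have "brackets P as = (\<lambda>x. x * brackets P as 1)" by (rule bracket_free_is_mult)
    then show ?thesis using sym[OF True] by (simp add: symbol_def)
  next
    case False
    then show ?thesis using ord len by (simp add: ord_below_def)
  qed
qed

lemma diffop_iff_ord_below: "diffop phi d P \<longleftrightarrow> klin phi P \<and> ord_below (Suc d) P"
proof (induction d arbitrary: P)
  case 0
  show ?case
  proof
    assume "diffop phi 0 P"
    then obtain a where "P = (\<lambda>x. a * x)" by auto
    moreover have "bracket (\<lambda>x. a * x) b = (\<lambda>x. 0)" for b
      by (simp add: bracket_def fun_eq_iff algebra_simps)
    ultimately show "klin phi P \<and> ord_below (Suc 0) P"
      by (simp add: klin_mult ord_below_Suc ord_below_0)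
  next
    assume "klin phi P \<and> ord_below (Suc 0) P"
    then have "P = (\<lambda>x. x * P 1)"
      by (intro bracket_free_is_mult) (simp add: ord_below_Suc ord_below_0)
    then have "P = (\<lambda>x. P 1 * x)" by (simp add: mult.commute)
    then show "diffop phi 0 P" unfolding diffop.simps by blast
  qed
next
  case (Suc d)
  have "diffop phi (Suc d) P \<longleftrightarrow> klin phi P \<and> (\<forall>a. diffop phi d (bracket P a))"
    by (simp add: bracket_def)
  also have "\<dots> \<longleftrightarrow> klin phi P \<and> ord_below (Suc (Suc d)) P"
    using Suc.IH klin_bracket by (auto simp: ord_below_Suc)
  finally show ?case .
qed

lemma bracket_comp:
  "klin phi R \<Longrightarrow> bracket (\<lambda>x. R (Q x)) a = (\<lambda>x. bracket R a (Q x) + R (bracket Q a x))"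
  by (simp add: bracket_def fun_eq_iff klin_minus)

lemma comp_zero:
  assumes "klin phi R" "ord_below p R" "ord_below q Q" "p = 0 \<or> q = 0"
  shows "(\<lambda>x. R (Q x)) = (\<lambda>x. 0)"
  using assms by (auto simp: ord_below_0 klin_at_0)

lemma brackets_comp_vanish:
  assumes "klin phi R" "klin phi Q" "ord_below p R" "ord_below q Q" "p + q \<le> Suc (length as)"
  shows "brackets (\<lambda>x. R (Q x)) as = (\<lambda>x. 0)"
  using assms
proof (induction as arbitrary: R Q p q)
  case Nil
  then have "p = 0 \<or> q = 0" by auto
  then show ?case using comp_zero[OF Nil.prems(1,3,4)] by simp
next
  case (Cons a as)
  show ?case
  proof (cases "p = 0 \<or> q = 0")
    case True
    then show ?thesis using comp_zero[OF Cons.prems(1,3,4)] by simp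
  next
    case False
    have 1: "brackets (\<lambda>x. bracket R a (Q x)) as = (\<lambda>x. 0)"
      using Cons.IH[OF klin_bracket[OF Cons.prems(1)] Cons.prems(2)
          ord_below_bracket[OF Cons.prems(3)] Cons.prems(4)] Cons.prems(5) False by simp
    have 2: "brackets (\<lambda>x. R (bracket Q a x)) as = (\<lambda>x. 0)"
      using Cons.IH[OF Cons.prems(1) klin_bracket[OF Cons.prems(2)]
          Cons.prems(3) ord_below_bracket[OF Cons.prems(4)]] Cons.prems(5) False by simp
    have "brackets (\<lambda>x. R (Q x)) (a # as)
        = brackets (\<lambda>x. bracket R a (Q x) + R (bracket Q a x)) as"
      by (simp only: brackets.simps bracket_comp[OF Cons.prems(1), of Q a])
    then show ?thesis using 1 2 by (simp add: brackets_add)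
  qed
qed

lemma ord_below_comp:
  assumes "klin phi R" "klin phi Q" "ord_below p R" "ord_below q Q"
  shows "ord_below (p + q - 1) (\<lambda>x. R (Q x))"
  using brackets_comp_vanish[OF assms] by (simp add: ord_below_def)

text \<open>This is the
  induction step for the commutators of the monomial operators D_\<alpha>.\<close>
lemma bracket_comp_leading:
  assumes kX: "klin phi X" and kY: "klin phi Y" and kY': "klin phi Y'" and kT: "klin phi T"
    and oX: "ord_below (Suc p) X" and oY: "ord_below (Suc (Suc q)) Y"
    and oY': "ord_below (Suc q) Y'"
    and rX: "ord_below (p - 1) (\<lambda>x. bracket X a x - T x)"
    and rY: "ord_below q (\<lambda>x. bracket Y a x - b * Y' x)"
  shows "ord_below (p + q) (\<lambda>x. bracket (\<lambda>x. X (Y x)) a x - (T (Y x) + b * X (Y' x)))"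
proof -
  define R1 where "R1 = (\<lambda>x. bracket X a x - T x)"
  define R2 where "R2 = (\<lambda>x. bracket Y a x - b * Y' x)"
  have k1: "klin phi R1" unfolding R1_def by (rule klin_diff[OF klin_bracket[OF kX] kT])
  have k2: "klin phi R2" unfolding R2_def by (rule klin_diff[OF klin_bracket[OF kY] klin_scal[OF kY']])
  have "bracket (\<lambda>x. X (Y x)) a x - (T (Y x) + b * X (Y' x))
      = R1 (Y x) + bracket X b (Y' x) + X (R2 x)" for x
  proof -
    have "bracket (\<lambda>x. X (Y x)) a x = bracket X a (Y x) + X (bracket Y a x)"
      using fun_cong[OF bracket_comp[OF kX, of Y a]] by simp
    moreover have "X (bracket Y a x) = X (b * Y' x) + X (R2 x)"
      using klin_minus[OF kX, of "bracket Y a x" "b * Y' x"] by (simp add: R2_def)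
    moreover have "X (b * Y' x) = b * X (Y' x) + bracket X b (Y' x)"
      by (simp add: bracket_def)
    ultimately show ?thesis by (simp add: R1_def algebra_simps)
  qed
  moreover have "ord_below (p + q) (\<lambda>x. R1 (Y x))"
  proof (cases "p = 0")
    case True
    then show ?thesis using rX by (simp add: R1_def[symmetric] ord_below_0 ord_below_zero)
  next
    case False
    then show ?thesis using ord_below_comp[OF k1 kY rX[folded R1_def] oY] by simp
  qed
  moreover have "ord_below (p + q) (\<lambda>x. bracket X b (Y' x))"
    using ord_below_comp[OF klin_bracket[OF kX] kY' ord_below_bracket[OF oX] oY'] by simp
  moreover have "ord_below (p + q) (\<lambda>x. X (R2 x))"
    using ord_below_comp[OF kX k2 oX rY[folded R2_def]] by simp
  ultimately show ?thesis by (simp add: ord_below_add)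
qed

section \<open>Hasse--Schmidt derivations\<close>

lemma HS_0: "HS phi D \<Longrightarrow> D 0 = id"
  by (simp add: HS_def)

lemma HS_klin: "HS phi D \<Longrightarrow> klin phi (D i)"
  by (simp add: HS_def)

lemma HS_mult: "HS phi D \<Longrightarrow> D i (x * y) = (\<Sum>r\<le>i. D r x * D (i - r) y)"
  by (simp add: HS_def)

lemma HS_bracket:
  assumes "HS phi D" shows "bracket (D m) a = (\<lambda>x. \<Sum>r\<in>{1..m}. D r a * D (m - r) x)"
proof
  fix x
  have "{..m} = insert 0 {1..m}" by auto
  then have "(\<Sum>r\<le>m. D r a * D (m - r) x) = D 0 a * D m x + (\<Sum>r\<in>{1..m}. D r a * D (m - r) x)"
    by simp
  then show "bracket (D m) a x = (\<Sum>r\<in>{1..m}. D r a * D (m - r) x)"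
    using assms by (simp add: bracket_def HS_mult HS_0)
qed

lemma HS_ord_below: assumes "HS phi D" shows "ord_below (Suc m) (D m)"
proof (induction m rule: less_induct)
  case (less m)
  have "ord_below m (bracket (D m) a)" for a
    unfolding HS_bracket[OF assms]
  proof (rule ord_below_sum)
    fix r assume r: "r \<in> {1..m}"
    then have "ord_below (Suc (m - r)) (D (m - r))" using less.IH by simp
    then show "ord_below m (\<lambda>x. D r a * D (m - r) x)"
      by (intro ord_below_scal, rule ord_below_mono) (use r in auto)
  qed simp
  then show ?case by (simp add: ord_below_Suc)
qed

lemma HS_bracket_leading:
  assumes "HS phi D" shows "ord_below q (\<lambda>x. bracket (D (Suc q)) a x - D 1 a * D q x)"
proof -
  have "{1..Suc q} = insert 1 {2..Suc q}" by auto
  then have "(\<lambda>x. bracket (D (Suc q)) a x - D 1 a * D q x)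
      = (\<lambda>x. \<Sum>r\<in>{2..Suc q}. D r a * D (Suc q - r) x)"
    by (simp add: HS_bracket[OF assms])
  moreover have "ord_below q (\<lambda>x. \<Sum>r\<in>{2..Suc q}. D r a * D (Suc q - r) x)"
  proof (rule ord_below_sum)
    fix r assume r: "r \<in> {2..Suc q}"
    have "ord_below (Suc (Suc q - r)) (D (Suc q - r))" by (rule HS_ord_below[OF assms])
    then show "ord_below q (\<lambda>x. D r a * D (Suc q - r) x)"
      by (intro ord_below_scal, rule ord_below_mono) (use r in auto)
  qed simp
  ultimately show ?thesis by simp
qed

definition layer :: "nat \<Rightarrow> nat \<Rightarrow> (nat \<Rightarrow> nat) set" where
  "layer n N = {\<alpha>. (\<forall>j\<ge>n. \<alpha> j = 0) \<and> (\<Sum>j<n. \<alpha> j) = N}"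

definition idx_inc :: "(nat \<Rightarrow> nat) \<Rightarrow> nat \<Rightarrow> nat \<Rightarrow> nat" where
  "idx_inc \<alpha> j = \<alpha>(j := Suc (\<alpha> j))"

definition idx_dec :: "(nat \<Rightarrow> nat) \<Rightarrow> nat \<Rightarrow> nat \<Rightarrow> nat" where
  "idx_dec \<alpha> j = \<alpha>(j := \<alpha> j - 1)"

lemma finite_multi_idx: "finite (multi_idx n d)"
proof (rule finite_subset)
  show "multi_idx n d \<subseteq> {\<alpha>. \<forall>j. (j \<in> {..<n} \<longrightarrow> \<alpha> j \<in> {..d}) \<and> (j \<notin> {..<n} \<longrightarrow> \<alpha> j = 0)}"
  proof (clarsimp simp: multi_idx_def)
    fix \<alpha> j assume "(\<Sum>j<n. \<alpha> j) \<le> d" "j < n"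
    then show "\<alpha> j \<le> d" using member_le_sum[of j "{..<n}" \<alpha>] by simp
  qed
qed (rule finite_set_of_finite_funs; simp)

lemma finite_layer: "finite (layer n N)"
  by (rule finite_subset[OF _ finite_multi_idx[of n N]]) (auto simp: layer_def multi_idx_def)

lemma layer_0: "layer n 0 = {\<lambda>_. 0}"
  by (auto simp: layer_def fun_eq_iff) (metis lessThan_iff not_le)

lemma multi_idx_0: "multi_idx n 0 = {\<lambda>_. 0}"
  using layer_0[of n] by (simp add: layer_def multi_idx_def)

lemma multi_idx_Suc: "multi_idx n (Suc d) = multi_idx n d \<union> layer n (Suc d)"
  by (auto simp: multi_idx_def layer_def)

lemma multi_idx_layer_disj: "multi_idx n d \<inter> layer n (Suc d) = {}"
  by (auto simp: multi_idx_def layer_def)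

lemma sum_multi_idx_Suc:
  "(\<Sum>\<alpha>\<in>multi_idx n (Suc d). f \<alpha>) = (\<Sum>\<alpha>\<in>multi_idx n d. f \<alpha>) + (\<Sum>\<alpha>\<in>layer n (Suc d). f \<alpha>)"
  unfolding multi_idx_Suc
  by (rule sum.union_disjoint[OF finite_multi_idx finite_layer multi_idx_layer_disj])

lemma sum_upd:
  fixes \<beta> :: "nat \<Rightarrow> nat" assumes "j < n"
  shows "(\<Sum>i<n. (\<beta>(j := v)) i) + \<beta> j = (\<Sum>i<n. \<beta> i) + v"
proof -
  have "(\<Sum>i<n. g i) = g j + (\<Sum>i\<in>{..<n} - {j}. g i)" for g :: "nat \<Rightarrow> nat"
    using assms by (simp add: sum.remove)
  moreover have "(\<Sum>i\<in>{..<n} - {j}. (\<beta>(j := v)) i) = (\<Sum>i\<in>{..<n} - {j}. \<beta> i)"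
    by (rule sum.cong) auto
  ultimately show ?thesis by (metis add.commute add.left_commute fun_upd_same)
qed

lemma layer_pos_lt: "\<alpha> \<in> layer n N \<Longrightarrow> 0 < \<alpha> j \<Longrightarrow> j < n"
  by (auto simp: layer_def) (metis less_irrefl not_le)

lemma idx_inc_layer: "j < n \<Longrightarrow> \<beta> \<in> layer n N \<Longrightarrow> idx_inc \<beta> j \<in> layer n (Suc N)"
  using sum_upd[of j n \<beta> "Suc (\<beta> j)"] by (auto simp: layer_def idx_inc_def)

lemma idx_dec_layer: "\<alpha> \<in> layer n (Suc N) \<Longrightarrow> 0 < \<alpha> j \<Longrightarrow> idx_dec \<alpha> j \<in> layer n N"
  using sum_upd[of j n \<alpha> "\<alpha> j - 1"] layer_pos_lt[of \<alpha> n "Suc N" j]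
  by (auto simp: layer_def idx_dec_def)

lemma idx_dec_inc [simp]: "idx_dec (idx_inc \<beta> j) j = \<beta>"
  by (auto simp: idx_dec_def idx_inc_def)

lemma idx_inc_pos [simp]: "0 < idx_inc \<beta> j j"
  by (simp add: idx_inc_def)

lemma idx_inc_dec: "0 < \<alpha> j \<Longrightarrow> idx_inc (idx_dec \<alpha> j) j = \<alpha>"
  by (auto simp: idx_dec_def idx_inc_def)

lemma layer_Suc_pos: assumes "\<alpha> \<in> layer n (Suc N)" shows "\<exists>j<n. 0 < \<alpha> j"
  using assms by (auto simp: layer_def) (metis gr0I sum.neutral lessThan_iff nat.distinct(1))

lemma sum_layer_Suc_reindex:
  assumes "j < n"
  shows "(\<Sum>\<alpha>\<in>layer n (Suc N). if 0 < \<alpha> j then g \<alpha> else 0) = (\<Sum>\<beta>\<in>layer n N. g (idx_inc \<beta> j))"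
proof -
  have "(\<Sum>\<alpha>\<in>layer n (Suc N). if 0 < \<alpha> j then g \<alpha> else 0) = sum g {\<alpha> \<in> layer n (Suc N). 0 < \<alpha> j}"
    by (simp add: sum.inter_filter finite_layer)
  also have "\<dots> = (\<Sum>\<beta>\<in>layer n N. g (idx_inc \<beta> j))"
    by (rule sum.reindex_bij_witness[where i = "\<lambda>\<beta>. idx_inc \<beta> j" and j = "\<lambda>\<alpha>. idx_dec \<alpha> j"])
       (auto simp: idx_inc_dec idx_dec_layer idx_inc_layer assms)
  finally show ?thesis .
qed

text \<open>This is how symmetry of symbols is used.\<close>
lemma layer_symmetric_integrate:
  assumes sym: "\<And>N' \<gamma> i j. N = Suc N' \<Longrightarrow> \<gamma> \<in> layer n N' \<Longrightarrow> i < n \<Longrightarrow> j < n \<Longrightarrow>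
      B (idx_inc \<gamma> j) i = B (idx_inc \<gamma> i) j"
  shows "\<exists>e. \<forall>\<beta>\<in>layer n N. \<forall>j<n. e (idx_inc \<beta> j) = B \<beta> j"
proof (intro exI ballI allI impI)
  define J where "J \<alpha> = (LEAST j. 0 < \<alpha> j)" for \<alpha> :: "nat \<Rightarrow> nat"
  fix \<beta> j assume \<beta>: "\<beta> \<in> layer n N" and j: "j < n"
  define i where "i = J (idx_inc \<beta> j)"
  have "0 < idx_inc \<beta> j i"
    unfolding i_def J_def by (rule LeastI[of _ j]) simp
  show "B (idx_dec (idx_inc \<beta> j) (J (idx_inc \<beta> j))) (J (idx_inc \<beta> j)) = B \<beta> j"
  proof (cases "i = j")
    case True
    then show ?thesis by (simp add: i_def)
  next
    case False
    with \<open>0 < idx_inc \<beta> j i\<close> have pos: "0 < \<beta> i" by (simp add: idx_inc_def)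
    then obtain N' where N: "N = Suc N'" using \<beta> by (cases N) (auto simp: layer_0)
    define \<gamma> where "\<gamma> = idx_dec \<beta> i"
    have \<gamma>: "\<gamma> \<in> layer n N'" unfolding \<gamma>_def using idx_dec_layer \<beta> pos N by blast
    have "idx_dec (idx_inc \<beta> j) i = idx_inc \<gamma> j"
      using False by (auto simp: \<gamma>_def idx_dec_def idx_inc_def fun_eq_iff)
    then have "B (idx_dec (idx_inc \<beta> j) i) i = B (idx_inc \<gamma> i) j"
      using sym[OF N \<gamma> layer_pos_lt[OF \<beta> pos] j] by simp
    also have "idx_inc \<gamma> i = \<beta>" unfolding \<gamma>_def by (rule idx_inc_dec[of \<beta> i, OF pos])
    finally show ?thesis by (simp add: i_def)
  qed
qed

section \<open>Monomials in a family of Hasse--Schmidt derivations\<close>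

lemma Dcomp_cong: "(\<And>j. j < m \<Longrightarrow> \<alpha> j = \<beta> j) \<Longrightarrow> Dcomp Dd m \<alpha> = Dcomp Dd m \<beta>"
  by (induction m) auto

locale HS_basis =
  fixes phi :: "'k::comm_ring_1 \<Rightarrow> 'a::comm_ring_1" and Dd :: "nat \<Rightarrow> nat \<Rightarrow> 'a \<Rightarrow> 'a"
    and n :: nat
  assumes hs: "\<forall>j<n. HS phi (Dd j)"
    and span: "\<forall>\<delta>\<in>Der phi. \<exists>b :: nat \<Rightarrow> 'a. \<delta> = (\<lambda>x. \<Sum>j<n. b j * Dd j 1 x)"
    and indep: "\<forall>b :: nat \<Rightarrow> 'a. (\<lambda>x. \<Sum>j<n. b j * Dd j 1 x) = (\<lambda>x. 0) \<longrightarrow> (\<forall>j<n. b j = 0)"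
begin

lemma basis_coeffs_zero:
  assumes "\<And>x. (\<Sum>j<n. b j * Dd j 1 x) = 0" "j < n" shows "b j = 0"
proof -
  have "(\<lambda>x. \<Sum>j<n. b j * Dd j 1 x) = (\<lambda>x. 0)" using assms(1) by (rule ext)
  then show ?thesis using indep assms(2) by blast
qed

lemma HS_Dd: "j < n \<Longrightarrow> HS phi (Dd j)"
  using hs by simp

lemma Dcomp_klin: "m \<le> n \<Longrightarrow> klin phi (Dcomp Dd m \<alpha>)"
proof (induction m)
  case 0
  show ?case unfolding Dcomp.simps klin_def by simp
next
  case (Suc m)
  have "klin phi (Dd m (\<alpha> m))" using HS_Dd[of m] Suc.prems by (simp add: HS_klin)
  then have "klin phi (\<lambda>x. Dcomp Dd m \<alpha> (Dd m (\<alpha> m) x))"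
    using Suc by (auto intro: klin_comp[of phi "Dcomp Dd m \<alpha>"])
  then show ?case by (simp add: o_def)
qed

lemma Dcomp_ord_below: "m \<le> n \<Longrightarrow> ord_below (Suc (\<Sum>j<m. \<alpha> j)) (Dcomp Dd m \<alpha>)"
proof (induction m)
  case 0
  then show ?case by (simp add: ord_below_Suc ord_below_0 bracket_def)
next
  case (Suc m)
  have h: "HS phi (Dd m)" using HS_Dd Suc.prems by simp
  have "ord_below (Suc (\<Sum>j<m. \<alpha> j) + Suc (\<alpha> m) - 1) (\<lambda>x. Dcomp Dd m \<alpha> (Dd m (\<alpha> m) x))"
    using Suc.prems by (intro ord_below_comp[OF Dcomp_klin HS_klin[OF h] Suc.IH HS_ord_below[OF h]]) simp_all
  then show ?case by (simp add: o_def)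
qed

lemma Dcomp_zero: "m \<le> n \<Longrightarrow> Dcomp Dd m (\<lambda>_. 0) = id"
proof (induction m)
  case (Suc m)
  then show ?case using HS_0[OF HS_Dd[of m]] by simp
qed simp

lemma bracket_Dcomp_leading:
  "m \<le> n \<Longrightarrow> ord_below ((\<Sum>j<m. \<alpha> j) - 1)
     (\<lambda>x. bracket (Dcomp Dd m \<alpha>) a x
        - (\<Sum>j<m. (if 0 < \<alpha> j then Dd j 1 a else 0) * Dcomp Dd m (idx_dec \<alpha> j) x))"
proof (induction m)
  case 0
  then show ?case by (simp add: bracket_def ord_below_zero)
next
  case (Suc m)
  have h: "HS phi (Dd m)" using HS_Dd Suc.prems by simp
  define c where "c j = (if 0 < \<alpha> j then Dd j 1 a else 0)" for j
  define X where "X = Dcomp Dd m \<alpha>"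
  define T where "T = (\<lambda>x. \<Sum>j<m. c j * Dcomp Dd m (idx_dec \<alpha> j) x)"
  have IH: "ord_below ((\<Sum>j<m. \<alpha> j) - 1) (\<lambda>x. bracket X a x - T x)"
    using Suc by (simp add: X_def T_def c_def)
  have dec_lower: "Dcomp Dd (Suc m) (idx_dec \<alpha> j) = (\<lambda>x. Dcomp Dd m (idx_dec \<alpha> j) (Dd m (\<alpha> m) x))"
    if "j < m" for j
    using that by (simp add: idx_dec_def o_def)
  show ?case
  proof (cases "\<alpha> m")
    case 0
    text \<open>D^m_0 = id, so neither side changes when m is added.\<close>
    have "Dcomp Dd (Suc m) \<alpha> = X" using 0 HS_0[OF h] by (simp add: X_def)
    moreover have "(\<Sum>j<Suc m. c j * Dcomp Dd (Suc m) (idx_dec \<alpha> j) x) = T x" for x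
    proof -
      have "(\<Sum>j<m. c j * Dcomp Dd (Suc m) (idx_dec \<alpha> j) x) = T x"
        unfolding T_def using 0 HS_0[OF h] dec_lower by (intro sum.cong) auto
      then show ?thesis using 0 by (simp add: c_def)
    qed
    ultimately show ?thesis using IH 0 by (simp add: c_def)
  next
    case (Suc q)
    text \<open>Composition rule with Y = D^m_(q+1), whose leading term is D^m_1(a) D^m_q.\<close>
    have kT: "klin phi T" unfolding T_def
      using Suc.prems by (intro klin_sum klin_scal Dcomp_klin) auto
    have kX: "klin phi X" and oX: "ord_below (Suc (\<Sum>j<m. \<alpha> j)) X"
      using Suc.prems by (simp_all add: X_def Dcomp_klin Dcomp_ord_below)
    have "ord_below ((\<Sum>j<m. \<alpha> j) + q)
        (\<lambda>x. bracket (\<lambda>x. X (Dd m (Suc q) x)) a x - (T (Dd m (Suc q) x) + Dd m 1 a * X (Dd m q x)))"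
      by (rule bracket_comp_leading[OF kX HS_klin[OF h] HS_klin[OF h] kT oX HS_ord_below[OF h]
            HS_ord_below[OF h] IH HS_bracket_leading[OF h]])
    moreover have "Dcomp Dd (Suc m) \<alpha> = (\<lambda>x. X (Dd m (Suc q) x))"
      using Suc by (simp add: X_def o_def)
    moreover have "(\<Sum>j<Suc m. c j * Dcomp Dd (Suc m) (idx_dec \<alpha> j) x)
        = T (Dd m (Suc q) x) + Dd m 1 a * X (Dd m q x)" for x
    proof -
      have "(\<Sum>j<m. c j * Dcomp Dd (Suc m) (idx_dec \<alpha> j) x) = T (Dd m (Suc q) x)"
        unfolding T_def using Suc dec_lower by (intro sum.cong) auto
      moreover have "Dcomp Dd m (idx_dec \<alpha> m) = X"
        unfolding X_def by (rule Dcomp_cong) (simp add: idx_dec_def)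
      then have "Dcomp Dd (Suc m) (idx_dec \<alpha> m) x = X (Dd m q x)"
        using Suc by (simp add: idx_dec_def o_def)
      ultimately show ?thesis using Suc by (simp add: c_def)
    qed
    ultimately show ?thesis using Suc by (simp add: c_def)
  qed
qed

end

context HS_basis
begin

abbreviation Dop :: "(nat \<Rightarrow> nat) \<Rightarrow> 'a \<Rightarrow> 'a" where
  "Dop \<equiv> Dcomp Dd n"

lemma Dop_klin: "klin phi (Dop \<alpha>)"
  by (simp add: Dcomp_klin)

lemma Dop_ord_below: "ord_below (Suc (\<Sum>j<n. \<alpha> j)) (Dop \<alpha>)"
  by (simp add: Dcomp_ord_below)

lemma Dop_zero: "Dop (\<lambda>_. 0) = id"
  by (simp add: Dcomp_zero)

lemma symbol_Dop_high: "(\<Sum>j<n. \<alpha> j) < length as \<Longrightarrow> symbol (Dop \<alpha>) as = 0"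
  using ord_below_symbol[OF Dop_ord_below] by (simp add: Suc_le_eq)

lemma symbol_comb:
  "finite S \<Longrightarrow> symbol (\<lambda>x. \<Sum>\<alpha>\<in>S. e \<alpha> * Dop \<alpha> x) as = (\<Sum>\<alpha>\<in>S. e \<alpha> * symbol (Dop \<alpha>) as)"
  by (simp add: symbol_sum symbol_scal)

lemma symbol_Dop_Cons:
  assumes "(\<Sum>j<n. \<alpha> j) = Suc k" "length as = k"
  shows "symbol (Dop \<alpha>) (a # as)
       = (\<Sum>j<n. (if 0 < \<alpha> j then Dd j 1 a else 0) * symbol (Dop (idx_dec \<alpha> j)) as)"
proof -
  define T where "T = (\<lambda>x. \<Sum>j<n. (if 0 < \<alpha> j then Dd j 1 a else 0) * Dop (idx_dec \<alpha> j) x)"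
  have "ord_below k (\<lambda>x. bracket (Dop \<alpha>) a x - T x)"
    using bracket_Dcomp_leading[of n \<alpha> a] assms(1) by (simp add: T_def)
  then have "symbol (\<lambda>x. bracket (Dop \<alpha>) a x - T x) as = 0"
    by (rule ord_below_symbol) (simp add: assms(2))
  then have "symbol (Dop \<alpha>) (a # as) = symbol T as"
    by (simp add: symbol_Cons symbol_diff)
  then show ?thesis by (simp add: T_def symbol_sum symbol_scal)
qed

lemma symbol_layer_Cons:
  assumes len: "length as = N"
  shows "(\<Sum>\<alpha>\<in>layer n (Suc N). e \<alpha> * symbol (Dop \<alpha>) (a # as))
       = (\<Sum>j<n. Dd j 1 a * (\<Sum>\<beta>\<in>layer n N. e (idx_inc \<beta> j) * symbol (Dop \<beta>) as))"
proof -
  have "(\<Sum>\<alpha>\<in>layer n (Suc N). e \<alpha> * symbol (Dop \<alpha>) (a # as))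
     = (\<Sum>\<alpha>\<in>layer n (Suc N). \<Sum>j<n.
          if 0 < \<alpha> j then Dd j 1 a * (e \<alpha> * symbol (Dop (idx_dec \<alpha> j)) as) else 0)"
  proof (rule sum.cong[OF refl])
    fix \<alpha> assume "\<alpha> \<in> layer n (Suc N)"
    then have "symbol (Dop \<alpha>) (a # as)
        = (\<Sum>j<n. (if 0 < \<alpha> j then Dd j 1 a else 0) * symbol (Dop (idx_dec \<alpha> j)) as)"
      using symbol_Dop_Cons len by (simp add: layer_def)
    then show "e \<alpha> * symbol (Dop \<alpha>) (a # as) = (\<Sum>j<n.
          if 0 < \<alpha> j then Dd j 1 a * (e \<alpha> * symbol (Dop (idx_dec \<alpha> j)) as) else 0)"
      by (simp add: sum_distrib_left) (rule sum.cong, auto simp: algebra_simps)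
  qed
  also have "\<dots> = (\<Sum>j<n. \<Sum>\<alpha>\<in>layer n (Suc N).
          if 0 < \<alpha> j then Dd j 1 a * (e \<alpha> * symbol (Dop (idx_dec \<alpha> j)) as) else 0)"
    by (rule sum.swap)
  also have "\<dots> = (\<Sum>j<n. Dd j 1 a * (\<Sum>\<beta>\<in>layer n N. e (idx_inc \<beta> j) * symbol (Dop \<beta>) as))"
    by (rule sum.cong[OF refl]) (simp add: sum_layer_Suc_reindex sum_distrib_left)
  finally show ?thesis .
qed

lemma symbol_layer_coeffs_zero:
  "(\<And>as. length as = N \<Longrightarrow> (\<Sum>\<alpha>\<in>layer n N. e \<alpha> * symbol (Dop \<alpha>) as) = 0) \<Longrightarrow>
    \<alpha> \<in> layer n N \<Longrightarrow> e \<alpha> = 0"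
proof (induction N arbitrary: e \<alpha>)
  case 0
  then show ?case using 0(1)[of "[]"] by (simp add: layer_0 Dop_zero symbol_def)
next
  case (Suc N)
  have next_layer: "(\<Sum>\<beta>\<in>layer n N. e (idx_inc \<beta> j) * symbol (Dop \<beta>) as) = 0"
    if j: "j < n" and len: "length as = N" for j as
  proof (rule basis_coeffs_zero[OF _ j])
    fix a
    have "(\<Sum>\<alpha>\<in>layer n (Suc N). e \<alpha> * symbol (Dop \<alpha>) (a # as)) = 0"
      using Suc.prems(1) len by simp
    then show "(\<Sum>j<n. (\<Sum>\<beta>\<in>layer n N. e (idx_inc \<beta> j) * symbol (Dop \<beta>) as) * Dd j 1 a) = 0"
      unfolding symbol_layer_Cons[OF len] by (simp add: mult.commute)
  qed
  obtain j where j: "j < n" "0 < \<alpha> j" using layer_Suc_pos[OF Suc.prems(2)] by blast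
  have "e (idx_inc (idx_dec \<alpha> j) j) = 0"
    using Suc.IH[of "\<lambda>\<beta>. e (idx_inc \<beta> j)", OF next_layer[OF j(1)]]
      idx_dec_layer[OF Suc.prems(2) j(2)] by blast
  then show ?case using idx_inc_dec[of \<alpha> j, OF j(2)] by simp
qed

lemma symbol_layer_coeffs_unique:
  assumes "\<And>as. length as = N \<Longrightarrow>
      (\<Sum>\<beta>\<in>layer n N. f \<beta> * symbol (Dop \<beta>) as) = (\<Sum>\<beta>\<in>layer n N. g \<beta> * symbol (Dop \<beta>) as)"
    and "\<beta> \<in> layer n N"
  shows "f \<beta> = g \<beta>"
proof -
  have "(\<Sum>\<beta>\<in>layer n N. (f \<beta> - g \<beta>) * symbol (Dop \<beta>) as) = 0" if "length as = N" for as
    using assms(1)[OF that] by (simp add: left_diff_distrib sum_subtractf)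
  then have "f \<beta> - g \<beta> = 0"
    by (rule symbol_layer_coeffs_zero[of N "\<lambda>\<beta>. f \<beta> - g \<beta>", OF _ assms(2)])
  then show ?thesis by simp
qed

end

section \<open>Top-degree symbols of an arbitrary operator\<close>

context HS_basis
begin

lemma basis_bilinear_symmetric:
  assumes sym: "\<And>a b. (\<Sum>j<n. Dd j 1 a * (\<Sum>i<n. Dd i 1 b * X j i))
                    = (\<Sum>j<n. Dd j 1 b * (\<Sum>i<n. Dd i 1 a * X j i))"
    and i: "i < n" and j: "j < n"
  shows "X j i = X i j"
proof -
  have rows: "(\<Sum>i<n. Dd i 1 b * X j i) = (\<Sum>i<n. Dd i 1 b * X i j)" if j: "j < n" for b j
  proof -
    have "(\<Sum>i<n. Dd i 1 b * X j i) - (\<Sum>i<n. Dd i 1 b * X i j) = 0"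
    proof (rule basis_coeffs_zero[OF _ j])
      fix a
      have "(\<Sum>j<n. Dd j 1 b * (\<Sum>i<n. Dd i 1 a * X j i))
          = (\<Sum>j<n. \<Sum>i<n. Dd i 1 a * (Dd j 1 b * X j i))"
        by (simp add: sum_distrib_left mult.left_commute)
      also have "\<dots> = (\<Sum>i<n. \<Sum>j<n. Dd i 1 a * (Dd j 1 b * X j i))"
        by (rule sum.swap)
      also have "\<dots> = (\<Sum>i<n. Dd i 1 a * (\<Sum>j<n. Dd j 1 b * X j i))"
        by (simp add: sum_distrib_left)
      finally have swapped: "(\<Sum>j<n. Dd j 1 b * (\<Sum>i<n. Dd i 1 a * X j i))
          = (\<Sum>i<n. Dd i 1 a * (\<Sum>j<n. Dd j 1 b * X j i))" .
      have "(\<Sum>j<n. ((\<Sum>i<n. Dd i 1 b * X j i) - (\<Sum>i<n. Dd i 1 b * X i j)) * Dd j 1 a)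
          = (\<Sum>j<n. Dd j 1 a * (\<Sum>i<n. Dd i 1 b * X j i))
            - (\<Sum>j<n. Dd j 1 a * (\<Sum>i<n. Dd i 1 b * X i j))"
        by (simp add: left_diff_distrib right_diff_distrib sum_subtractf mult.commute)
      then show "(\<Sum>j<n. ((\<Sum>i<n. Dd i 1 b * X j i) - (\<Sum>i<n. Dd i 1 b * X i j)) * Dd j 1 a) = 0"
        unfolding sym[of a b] swapped by simp
    qed
    then show ?thesis by simp
  qed
  have "X j i - X i j = 0"
  proof (rule basis_coeffs_zero[OF _ i])
    fix b
    show "(\<Sum>i<n. (X j i - X i j) * Dd i 1 b) = 0"
      using rows[OF j, of b] by (simp add: left_diff_distrib right_diff_distrib sum_subtractf mult.commute)
  qed
  then show ?thesis by simp
qed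

text \<open>If the coefficients of a \<mapsto> sy P (a # as) with respect to the top-degree symbols
  are combinations \<Sum>_j D^j_1(a) B \<beta> j, then B is symmetric, because symbols are
  symmetric in their arguments.\<close>
lemma symbol_coeffs_symmetric:
  assumes B: "\<And>a as. length as = Suc N \<Longrightarrow> symbol P (a # as)
      = (\<Sum>j<n. Dd j 1 a * (\<Sum>\<beta>\<in>layer n (Suc N). B \<beta> j * symbol (Dop \<beta>) as))"
    and \<gamma>: "\<gamma> \<in> layer n N" and i: "i < n" and j: "j < n"
  shows "B (idx_inc \<gamma> j) i = B (idx_inc \<gamma> i) j"
proof -
  define X where "X as j i = (\<Sum>\<gamma>\<in>layer n N. B (idx_inc \<gamma> i) j * symbol (Dop \<gamma>) as)" for as j i
  have expand: "symbol P (a # b # as) = (\<Sum>j<n. Dd j 1 a * (\<Sum>i<n. Dd i 1 b * X as j i))"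
    if len: "length as = N" for a b as
    using B[of "b # as" a] len by (simp add: X_def symbol_layer_Cons)
  have X_sym: "X as j i = X as i j" if len: "length as = N" for as
  proof (rule basis_bilinear_symmetric[OF _ i j])
    fix a b
    show "(\<Sum>j<n. Dd j 1 a * (\<Sum>i<n. Dd i 1 b * X as j i))
        = (\<Sum>j<n. Dd j 1 b * (\<Sum>i<n. Dd i 1 a * X as j i))"
      using expand[OF len, of a b] expand[OF len, of b a] symbol_swap[of P a b as] by simp
  qed
  show ?thesis
    by (rule symbol_layer_coeffs_unique[where f = "\<lambda>\<gamma>. B (idx_inc \<gamma> j) i"
          and g = "\<lambda>\<gamma>. B (idx_inc \<gamma> i) j", OF _ \<gamma>]) (use X_sym in \<open>simp add: X_def\<close>)
qed

text \<open>For an operator of order \<le> N+1, the coefficients of a \<mapsto> sy P (a # as) with respect to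
  the symbols of degree N are derivations in a: additivity and k-linearity come from the
  linearity of the commutator, the Leibniz rule from the vanishing of (N+2)-fold symbols.\<close>
lemma symbol_coeffs_derivation:
  assumes kP: "klin phi P" and oP: "ord_below (Suc (Suc N)) P"
    and c: "\<And>a as. length as = N \<Longrightarrow>
      symbol P (a # as) = (\<Sum>\<beta>\<in>layer n N. c a \<beta> * symbol (Dop \<beta>) as)"
    and \<beta>: "\<beta> \<in> layer n N"
  shows "(\<lambda>a. c a \<beta>) \<in> Der phi"
proof -
  have add: "c (x + y) \<beta> = c x \<beta> + c y \<beta>" for x y
  proof (rule symbol_layer_coeffs_unique[OF _ \<beta>])
    fix as :: "'a list" assume len: "length as = N"
    have "symbol P ((x + y) # as) = symbol P (x # as) + symbol P (y # as)"
      by (simp add: symbol_Cons bracket_add_arg[OF kP] symbol_add)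
    then show "(\<Sum>\<beta>\<in>layer n N. c (x + y) \<beta> * symbol (Dop \<beta>) as)
        = (\<Sum>\<beta>\<in>layer n N. (c x \<beta> + c y \<beta>) * symbol (Dop \<beta>) as)"
      using c[OF len] by (simp add: distrib_right sum.distrib)
  qed
  have scalar: "c (phi k * x) \<beta> = phi k * c x \<beta>" for k x
  proof (rule symbol_layer_coeffs_unique[OF _ \<beta>])
    fix as :: "'a list" assume len: "length as = N"
    have "symbol P ((phi k * x) # as) = phi k * symbol P (x # as)"
      by (simp add: symbol_Cons bracket_scalar_arg[OF kP] symbol_scal)
    then show "(\<Sum>\<beta>\<in>layer n N. c (phi k * x) \<beta> * symbol (Dop \<beta>) as)
        = (\<Sum>\<beta>\<in>layer n N. (phi k * c x \<beta>) * symbol (Dop \<beta>) as)"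
      using c[OF len] by (simp add: sum_distrib_left mult.assoc)
  qed
  have leibniz: "c (x * y) \<beta> = y * c x \<beta> + x * c y \<beta>" for x y
  proof (rule symbol_layer_coeffs_unique[OF _ \<beta>])
    fix as :: "'a list" assume len: "length as = N"
    have "symbol P (x # y # as) = 0"
      using ord_below_symbol[OF oP] len by simp
    then have "symbol P ((x * y) # as) = y * symbol P (x # as) + x * symbol P (y # as)"
      by (simp add: symbol_Cons bracket_mult_arg symbol_add symbol_scal)
    then show "(\<Sum>\<beta>\<in>layer n N. c (x * y) \<beta> * symbol (Dop \<beta>) as)
        = (\<Sum>\<beta>\<in>layer n N. (y * c x \<beta> + x * c y \<beta>) * symbol (Dop \<beta>) as)"
      using c[OF len] by (simp add: sum_distrib_left distrib_right sum.distrib mult.assoc)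
  qed
  show ?thesis
    unfolding Der_def klin_def using add scalar leibniz by (simp add: algebra_simps)
qed

lemma symbol_layer_span:
  "klin phi P \<Longrightarrow> ord_below (Suc N) P \<Longrightarrow>
    \<exists>e. \<forall>as. length as = N \<longrightarrow> symbol P as = (\<Sum>\<alpha>\<in>layer n N. e \<alpha> * symbol (Dop \<alpha>) as)"
proof (induction N arbitrary: P)
  case 0
  have "symbol P [] = (\<Sum>\<alpha>\<in>layer n 0. P 1 * symbol (Dop \<alpha>) [])"
    by (simp add: layer_0 symbol_def Dop_zero)
  then show ?case by auto
next
  case (Suc N)
  have "\<forall>a. \<exists>e. \<forall>as. length as = N \<longrightarrow>
      symbol (bracket P a) as = (\<Sum>\<beta>\<in>layer n N. e \<beta> * symbol (Dop \<beta>) as)"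
    using Suc.IH klin_bracket[OF Suc.prems(1)] Suc.prems(2) by (simp add: ord_below_Suc)
  then obtain c where c: "\<And>a as. length as = N \<Longrightarrow>
      symbol P (a # as) = (\<Sum>\<beta>\<in>layer n N. c a \<beta> * symbol (Dop \<beta>) as)"
    by (metis choice symbol_Cons)
  have "\<forall>\<beta>\<in>layer n N. \<exists>b. (\<lambda>a. c a \<beta>) = (\<lambda>x. \<Sum>j<n. b j * Dd j 1 x)"
    using span symbol_coeffs_derivation[OF Suc.prems c] by blast
  then obtain B where B: "\<And>\<beta> a. \<beta> \<in> layer n N \<Longrightarrow> c a \<beta> = (\<Sum>j<n. B \<beta> j * Dd j 1 a)"
    by (metis bchoice)
  have expand: "symbol P (a # as)
      = (\<Sum>j<n. Dd j 1 a * (\<Sum>\<beta>\<in>layer n N. B \<beta> j * symbol (Dop \<beta>) as))"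
    if len: "length as = N" for a as
  proof -
    have "symbol P (a # as) = (\<Sum>\<beta>\<in>layer n N. \<Sum>j<n. Dd j 1 a * (B \<beta> j * symbol (Dop \<beta>) as))"
      unfolding c[OF len] by (intro sum.cong) (simp_all add: B sum_distrib_left sum_distrib_right mult_ac)
    also have "\<dots> = (\<Sum>j<n. \<Sum>\<beta>\<in>layer n N. Dd j 1 a * (B \<beta> j * symbol (Dop \<beta>) as))"
      by (rule sum.swap)
    finally show ?thesis by (simp add: sum_distrib_left)
  qed
  have sym: "B (idx_inc \<gamma> j) i = B (idx_inc \<gamma> i) j"
    if "N = Suc N'" "\<gamma> \<in> layer n N'" "i < n" "j < n" for N' \<gamma> i j
    by (rule symbol_coeffs_symmetric[OF _ that(2-4)]) (use expand that(1) in simp)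
  have "\<exists>e. \<forall>\<beta>\<in>layer n N. \<forall>j<n. e (idx_inc \<beta> j) = B \<beta> j"
    by (rule layer_symmetric_integrate) (rule sym; assumption)
  then obtain e where e: "\<forall>\<beta>\<in>layer n N. \<forall>j<n. e (idx_inc \<beta> j) = B \<beta> j"
    by blast
  have top: "symbol P (a # as) = (\<Sum>\<alpha>\<in>layer n (Suc N). e \<alpha> * symbol (Dop \<alpha>) (a # as))"
    if len: "length as = N" for a as
    unfolding expand[OF len] symbol_layer_Cons[OF len] using e by (intro sum.cong) simp_all
  show ?case
  proof (intro exI allI impI)
    fix as :: "'a list" assume "length as = Suc N"
    then obtain a as' where "as = a # as'" "length as' = N" by (cases as) auto
    then show "symbol P as = (\<Sum>\<alpha>\<in>layer n (Suc N). e \<alpha> * symbol (Dop \<alpha>) as)"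
      using top by simp
  qed
qed

end

context HS_basis
begin

lemma klin_comb: "finite S \<Longrightarrow> klin phi (\<lambda>x. \<Sum>\<alpha>\<in>S. e \<alpha> * Dop \<alpha> x)"
  by (intro klin_sum klin_scal Dop_klin)

lemma ord_below_layer_comb: "ord_below (Suc N) (\<lambda>x. \<Sum>\<alpha>\<in>layer n N. e \<alpha> * Dop \<alpha> x)"
proof (rule ord_below_sum[OF finite_layer])
  fix \<alpha> assume "\<alpha> \<in> layer n N"
  then show "ord_below (Suc N) (\<lambda>x. e \<alpha> * Dop \<alpha> x)"
    using Dop_ord_below[of \<alpha>] by (simp add: layer_def ord_below_scal)
qed

text \<open>Subtracting a suitable combination of the D_\<alpha>, |\<alpha>| = d+1, from an operator of order
  \<le> d+1 kills its top-degree symbols and hence lowers its order to \<le> d.\<close>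
lemma subtract_top_layer:
  assumes kP: "klin phi P" and oP: "ord_below (Suc (Suc d)) P"
  shows "\<exists>e. diffop phi d (\<lambda>x. P x - (\<Sum>\<alpha>\<in>layer n (Suc d). e \<alpha> * Dop \<alpha> x))"
proof -
  obtain e where e: "\<And>as. length as = Suc d \<Longrightarrow>
      symbol P as = (\<Sum>\<alpha>\<in>layer n (Suc d). e \<alpha> * symbol (Dop \<alpha>) as)"
    using symbol_layer_span[OF kP oP] by blast
  define Q where "Q = (\<lambda>x. \<Sum>\<alpha>\<in>layer n (Suc d). e \<alpha> * Dop \<alpha> x)"
  have "klin phi (\<lambda>x. P x - Q x)"
    unfolding Q_def by (rule klin_diff[OF kP klin_comb[OF finite_layer]])
  moreover have "ord_below (Suc d) (\<lambda>x. P x - Q x)"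
  proof (rule ord_below_lower)
    show "ord_below (Suc (Suc d)) (\<lambda>x. P x - Q x)"
      unfolding Q_def by (rule ord_below_diff[OF oP ord_below_layer_comb])
    show "symbol (\<lambda>x. P x - Q x) as = 0" if "length as = Suc d" for as
      using e[OF that] by (simp add: Q_def symbol_diff symbol_comb[OF finite_layer])
  qed
  ultimately show ?thesis by (auto simp: Q_def diffop_iff_ord_below)
qed

lemma expansion_exists:
  "diffop phi d P \<Longrightarrow> \<exists>a. (\<forall>\<alpha>. \<alpha> \<notin> multi_idx n d \<longrightarrow> a \<alpha> = 0)
     \<and> P = (\<lambda>x. \<Sum>\<alpha>\<in>multi_idx n d. a \<alpha> * Dop \<alpha> x)"
proof (induction d arbitrary: P)
  case 0
  then obtain c where P: "P = (\<lambda>x. c * x)" by auto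
  show ?case
    by (rule exI[of _ "\<lambda>\<alpha>. if \<alpha> = (\<lambda>_. 0) then c else 0"]) (simp add: P multi_idx_0 Dop_zero)
next
  case (Suc d)
  then have "klin phi P" "ord_below (Suc (Suc d)) P" by (simp_all add: diffop_iff_ord_below)
  then obtain e where "diffop phi d (\<lambda>x. P x - (\<Sum>\<alpha>\<in>layer n (Suc d). e \<alpha> * Dop \<alpha> x))"
    using subtract_top_layer by blast
  then obtain a' where a'0: "\<forall>\<alpha>. \<alpha> \<notin> multi_idx n d \<longrightarrow> a' \<alpha> = 0"
    and a': "(\<lambda>x. P x - (\<Sum>\<alpha>\<in>layer n (Suc d). e \<alpha> * Dop \<alpha> x))
        = (\<lambda>x. \<Sum>\<alpha>\<in>multi_idx n d. a' \<alpha> * Dop \<alpha> x)"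
    using Suc.IH by blast
  define a where "a \<alpha> = (if \<alpha> \<in> layer n (Suc d) then e \<alpha> else a' \<alpha>)" for \<alpha>
  have "P x = (\<Sum>\<alpha>\<in>multi_idx n (Suc d). a \<alpha> * Dop \<alpha> x)" for x
  proof -
    have "(\<Sum>\<alpha>\<in>multi_idx n d. a \<alpha> * Dop \<alpha> x) = (\<Sum>\<alpha>\<in>multi_idx n d. a' \<alpha> * Dop \<alpha> x)"
      using multi_idx_layer_disj[of n d] by (auto simp: a_def intro!: sum.cong)
    moreover have "(\<Sum>\<alpha>\<in>layer n (Suc d). a \<alpha> * Dop \<alpha> x) = (\<Sum>\<alpha>\<in>layer n (Suc d). e \<alpha> * Dop \<alpha> x)"
      by (simp add: a_def)
    ultimately show ?thesis
      using fun_cong[OF a', of x] by (simp add: sum_multi_idx_Suc diff_eq_eq)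
  qed
  moreover have "\<forall>\<alpha>. \<alpha> \<notin> multi_idx n (Suc d) \<longrightarrow> a \<alpha> = 0"
    using a'0 by (simp add: a_def multi_idx_Suc)
  ultimately show ?case by auto
qed

text \<open>Uniqueness: the zero operator has only the zero expansion.  The top-degree
  coefficients vanish by independence of top-degree symbols; then induct on the degree.\<close>
lemma expansion_zero:
  "(\<forall>\<alpha>. \<alpha> \<notin> multi_idx n d \<longrightarrow> a \<alpha> = 0) \<Longrightarrow>
    (\<lambda>x. \<Sum>\<alpha>\<in>multi_idx n d. a \<alpha> * Dop \<alpha> x) = (\<lambda>x. 0) \<Longrightarrow> a \<alpha> = 0"
proof (induction d arbitrary: \<alpha>)
  case 0
  have "a (\<lambda>_. 0) = 0" using fun_cong[OF 0(2), of 1] by (simp add: multi_idx_0 Dop_zero)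
  then show ?case using 0(1) by (cases "\<alpha> = (\<lambda>_. 0)") (auto simp: multi_idx_0)
next
  case (Suc d)
  have top: "a \<beta> = 0" if \<beta>: "\<beta> \<in> layer n (Suc d)" for \<beta>
  proof (rule symbol_layer_coeffs_zero[OF _ \<beta>])
    fix as :: "'a list" assume len: "length as = Suc d"
    have "(\<Sum>\<alpha>\<in>multi_idx n d. a \<alpha> * symbol (Dop \<alpha>) as) = 0"
      using len by (intro sum.neutral ballI) (simp add: multi_idx_def symbol_Dop_high)
    moreover have "(\<Sum>\<alpha>\<in>multi_idx n (Suc d). a \<alpha> * symbol (Dop \<alpha>) as) = 0"
      using arg_cong[OF Suc.prems(2), of "\<lambda>Q. symbol Q as"] by (simp add: symbol_comb finite_multi_idx)
    ultimately show "(\<Sum>\<alpha>\<in>layer n (Suc d). a \<alpha> * symbol (Dop \<alpha>) as) = 0"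
      by (simp add: sum_multi_idx_Suc)
  qed
  have "\<forall>\<alpha>. \<alpha> \<notin> multi_idx n d \<longrightarrow> a \<alpha> = 0"
    using Suc.prems(1) top by (auto simp: multi_idx_Suc)
  moreover have "(\<lambda>x. \<Sum>\<alpha>\<in>multi_idx n d. a \<alpha> * Dop \<alpha> x) = (\<lambda>x. 0)"
    using Suc.prems(2) top by (simp add: sum_multi_idx_Suc fun_eq_iff)
  ultimately show ?case using Suc.IH by blast
qed

lemma expansion_unique:
  assumes "\<forall>\<alpha>. \<alpha> \<notin> multi_idx n d \<longrightarrow> a \<alpha> = 0" and "\<forall>\<alpha>. \<alpha> \<notin> multi_idx n d \<longrightarrow> b \<alpha> = 0"
    and "(\<lambda>x. \<Sum>\<alpha>\<in>multi_idx n d. a \<alpha> * Dop \<alpha> x) = (\<lambda>x. \<Sum>\<alpha>\<in>multi_idx n d. b \<alpha> * Dop \<alpha> x)"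
  shows "a = b"
proof
  fix \<alpha>
  have "(\<lambda>x. \<Sum>\<alpha>\<in>multi_idx n d. (a \<alpha> - b \<alpha>) * Dop \<alpha> x) = (\<lambda>x. 0)"
    using assms(3) by (simp add: fun_eq_iff left_diff_distrib sum_subtractf)
  then have "a \<alpha> - b \<alpha> = 0"
    using assms(1,2) expansion_zero[of d "\<lambda>\<alpha>. a \<alpha> - b \<alpha>"] by simp
  then show "a \<alpha> = b \<alpha>" by simp
qed

end

theorem mainTheorem15:
  fixes phi :: "'k::comm_ring_1 \<Rightarrow> 'a::comm_ring_1"
    and Dd :: "nat \<Rightarrow> nat \<Rightarrow> 'a \<Rightarrow> 'a"
    and n d :: nat
    and P :: "'a \<Rightarrow> 'a"
  assumes alg: "ring_hom_fn phi"
    and ider: "Ider phi = Der phi"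
    and hs: "\<forall>j<n. HS phi (Dd j)"
    and span: "\<forall>\<delta>\<in>Der phi. \<exists>b :: nat \<Rightarrow> 'a. \<delta> = (\<lambda>x. \<Sum>j<n. b j * Dd j 1 x)"
    and indep: "\<forall>b :: nat \<Rightarrow> 'a. (\<lambda>x. \<Sum>j<n. b j * Dd j 1 x) = (\<lambda>x. 0) \<longrightarrow> (\<forall>j<n. b j = 0)"
    and P: "diffop phi d P"
  shows "\<exists>!a :: (nat \<Rightarrow> nat) \<Rightarrow> 'a. (\<forall>\<alpha>. \<alpha> \<notin> multi_idx n d \<longrightarrow> a \<alpha> = 0)
           \<and> P = (\<lambda>x. \<Sum>\<alpha>\<in>multi_idx n d. a \<alpha> * Dcomp Dd n \<alpha> x)"
proof -
  interpret HS_basis phi Dd n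
    using hs span indep by unfold_locales
  show ?thesis
    using expansion_exists[OF P] expansion_unique by blast
qed


end
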